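(* Let $f\in\mathcal{K}$ have radius of convergence $R>0$ and fulcrum $F$. Assume that $$\lim_{s\uparrow\ln R}\frac{F^{(k)}(s)}{F''(s)^{k/2}}=0\quad\text{for every integer }k\ge3.$$ Then $f$ is Gaussian.
   Context: The class $\mathcal{K}$ consists of non-constant power series $f(z)=\sum_{n\ge0}a_nz^n$ with radius of convergence $R\in(0,+\infty]$, with $a_n\ge 0$ for all $n$ and $a_0>0$. For $t\in(0,R)$, $X_t$ is the random variable with $\mathbf{P}(X_t=n)=a_nt^n/f(t)$, $n\ge0$ (the Khinchin family of $f$). Write $m_f(t)=\mathbf{E}(X_t)$, $\sigma_f^2(t)=\mathbf{V}(X_t)>0$ and $\breve{X}_t=(X_t-m_f(t))/\sigma_f(t)$. $f$ is called Gaussian if $\breve{X}_t$ converges in distribution to a standard normal random variable as $t\uparrow R$ (i.e. $t\to+\infty$ if $R=+\infty$). The fulcrum of $f$ is $F(s)=\ln f(e^s)$ for real $s<\ln R$; one has $F''(s)=\sigma_f^2(e^s)$. *)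

theory Defs
  imports "HOL-Probability.Probability"
begin

text \<open>A power series f(z) = sum a_n z^n is given by its coefficient sequence a.\<close>

definition in_class_K :: "(nat \<Rightarrow> real) \<Rightarrow> bool" where
  "in_class_K a \<longleftrightarrow> (\<forall>n. a n \<ge> 0) \<and> a 0 > 0 \<and> (\<exists>n>0. a n \<noteq> 0)
      \<and> conv_radius a > 0"

definition pser :: "(nat \<Rightarrow> real) \<Rightarrow> real \<Rightarrow> real" where
  "pser a t = (\<Sum>n. a n * t ^ n)"

definition khinchin_prob :: "(nat \<Rightarrow> real) \<Rightarrow> real \<Rightarrow> nat \<Rightarrow> real" where
  "khinchin_prob a t n = a n * t ^ n / pser a t"

definition khinchin_mean :: "(nat \<Rightarrow> real) \<Rightarrow> real \<Rightarrow> real" where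
  "khinchin_mean a t = (\<Sum>n. real n * khinchin_prob a t n)"

definition khinchin_var :: "(nat \<Rightarrow> real) \<Rightarrow> real \<Rightarrow> real" where
  "khinchin_var a t = (\<Sum>n. (real n - khinchin_mean a t)^2 * khinchin_prob a t n)"

definition khinchin_norm_cdf :: "(nat \<Rightarrow> real) \<Rightarrow> real \<Rightarrow> real \<Rightarrow> real" where
  "khinchin_norm_cdf a t x =
     (\<Sum>n. if (real n - khinchin_mean a t) / sqrt (khinchin_var a t) \<le> x
           then khinchin_prob a t n else 0)"

definition up_to :: "ereal \<Rightarrow> real filter" where
  "up_to R = (if R = \<infinity> then at_top else at_left (real_of_ereal R))"

definition up_to_ln :: "ereal \<Rightarrow> real filter" where
  "up_to_ln R = (if R = \<infinity> then at_top else at_left (ln (real_of_ereal R)))"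

text \<open>Gaussian: the normalized Khinchin variables converge in distribution to N(0,1),
  i.e. their CDFs converge pointwise to the (everywhere continuous) standard normal CDF.\<close>
definition gaussian :: "(nat \<Rightarrow> real) \<Rightarrow> bool" where
  "gaussian a \<longleftrightarrow> (\<forall>x. ((\<lambda>t. khinchin_norm_cdf a t x) \<longlongrightarrow>
       cdf (density lborel std_normal_density) x) (up_to (conv_radius a)))"

definition fulcrum :: "(nat \<Rightarrow> real) \<Rightarrow> real \<Rightarrow> real" where
  "fulcrum a s = ln (pser a (exp s))"

end

theory Submission
  imports Defs "HOL-Complex_Analysis.Complex_Analysis"
begin

text \<open>
  The cumulant generating function of the standardized variable \<open>(X\<^sub>t - m(t)) / \<sigma>(t)\<close> is
  \<open>z \<mapsto> F(ln t + z/\<sigma>) - F(ln t) - m z/\<sigma>\<close>, so its \<open>j\<close>-th cumulant is \<open>F\<^sup>(\<^sup>j\<^sup>)(ln t) / \<sigma>\<^sup>j\<close>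
  for \<open>j \<ge> 2\<close>, and \<open>\<sigma>\<^sup>2 = F''(ln t)\<close>. The hypothesis therefore says that all cumulants converge
  to those of the standard normal law (\<open>1\<close> for \<open>j = 2\<close>, \<open>0\<close> otherwise). Moments are
  polynomials in cumulants (complete Bell polynomials), so all moments converge to the normal
  moments, and since the normal law is determined by its moments, the standardized variables
  converge in distribution. The cumulant formula is read off from the Taylor coefficients at \<open>0\<close>
  of \<open>E exp(z X\<^sub>t) / E exp(0)\<close>, after continuing the fulcrum holomorphically into a complex
  neighbourhood of the real axis.
\<close>

section \<open>Complete Bell polynomials\<close>

text \<open>\<open>complete_bell g k\<close> is the \<open>k\<close>-th moment of a law whose \<open>j\<close>-th cumulant is \<open>g j\<close>;
  the value \<open>g 0\<close> is never used.\<close>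

fun complete_bell :: "(nat \<Rightarrow> 'a::comm_ring_1) \<Rightarrow> nat \<Rightarrow> 'a" where
  "complete_bell g 0 = 1"
| "complete_bell g (Suc k) =
     (\<Sum>i = 0..k. of_nat (k choose i) * g (Suc i) * complete_bell g (k - i))"

declare complete_bell.simps(2) [simp del]

lemma complete_bell_cong:
  assumes "\<And>j. j \<ge> 1 \<Longrightarrow> g j = h j"
  shows "complete_bell g k = complete_bell h k"
proof (induction k rule: less_induct)
  case (less k)
  show ?case
  proof (cases k)
    case (Suc k')
    show ?thesis unfolding Suc complete_bell.simps(2)
      by (intro sum.cong refl) (use less Suc assms in auto)
  qed simp
qed

lemma complete_bell_of_real:
  "complete_bell (\<lambda>j. of_real (g j) :: 'a::{real_algebra_1,comm_ring_1}) k = of_real (complete_bell g k)"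
proof (induction k rule: less_induct)
  case (less k)
  show ?case
  proof (cases k)
    case (Suc k')
    show ?thesis unfolding Suc complete_bell.simps(2) of_real_sum
      by (intro sum.cong refl) (use less Suc in auto)
  qed simp
qed

lemma tendsto_complete_bell:
  fixes g :: "'b \<Rightarrow> nat \<Rightarrow> real"
  assumes "\<And>j. j \<ge> 1 \<Longrightarrow> ((\<lambda>x. g x j) \<longlongrightarrow> g0 j) F"
  shows "((\<lambda>x. complete_bell (g x) k) \<longlongrightarrow> complete_bell g0 k) F"
proof (induction k rule: less_induct)
  case (less k)
  show ?case
  proof (cases k)
    case (Suc k')
    show ?thesis unfolding Suc complete_bell.simps(2)
      by (intro tendsto_sum tendsto_mult tendsto_const assms) (use less Suc in auto)
  qed simp
qed

definition std_normal_cumulant :: "nat \<Rightarrow> real" where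
  "std_normal_cumulant j = (if j = 2 then 1 else 0)"

lemma complete_bell_std_normal_cumulant_SucSuc:
  "complete_bell std_normal_cumulant (Suc (Suc k)) = real (Suc k) * complete_bell std_normal_cumulant k"
proof -
  have "complete_bell std_normal_cumulant (Suc (Suc k)) =
      (\<Sum>i\<in>{1}. of_nat (Suc k choose i) * std_normal_cumulant (Suc i) *
                  complete_bell std_normal_cumulant (Suc k - i))"
    unfolding complete_bell.simps(2)
    by (intro sum.mono_neutral_right) (auto simp: std_normal_cumulant_def)
  then show ?thesis by (simp add: std_normal_cumulant_def)
qed

lemma complete_bell_std_normal_cumulant_even_odd:
  "complete_bell std_normal_cumulant (2 * j) = fact (2 * j) / (2 ^ j * fact j) \<and>
   complete_bell std_normal_cumulant (2 * j + 1) = 0"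
proof (induction j)
  case 0
  then show ?case by (simp add: complete_bell.simps(2) std_normal_cumulant_def)
next
  case (Suc j)
  have fact_SucSuc: "fact (2 * Suc j) = (2 * real j + 2) * (2 * real j + 1) * fact (2 * j)"
    by (simp add: algebra_simps)
  have fact_Suc: "fact (Suc j) = (real j + 1) * fact j" by simp
  have nonzero: "2 ^ j * fact j \<noteq> (0::real)" "2 ^ Suc j * ((real j + 1) * fact j) \<noteq> 0"
    by (simp_all add: add_pos_nonneg)
  have "complete_bell std_normal_cumulant (2 * Suc j) =
      (2 * real j + 1) * (fact (2 * j) / (2 ^ j * fact j))"
    using Suc complete_bell_std_normal_cumulant_SucSuc[of "2 * j"] by simp
  also have "\<dots> = fact (2 * Suc j) / (2 ^ Suc j * fact (Suc j))"
    unfolding fact_SucSuc fact_Suc times_divide_eq_right frac_eq_eq[OF nonzero]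
    by (simp add: algebra_simps)
  finally show ?case
    using complete_bell_std_normal_cumulant_SucSuc[of "2 * j + 1"] Suc by simp
qed

lemma complete_bell_std_normal_cumulant:
  "complete_bell std_normal_cumulant k = (LINT x|std_normal_distribution. x ^ k)"
proof (cases "even k")
  case True
  then obtain j where "k = 2 * j" by blast
  then show ?thesis
    using complete_bell_std_normal_cumulant_even_odd std_normal_distribution_even_moments(1) by simp
next
  case False
  then obtain j where "k = 2 * j + 1" using oddE by blast
  then show ?thesis
    using complete_bell_std_normal_cumulant_even_odd integral_std_normal_distribution_moment_odd[of k] False
    by simp
qed

lemma higher_deriv_exp_complete_bell:
  fixes G :: "complex \<Rightarrow> complex"
  assumes holo: "G holomorphic_on W" and W: "open W" and z: "z \<in> W"
  shows "(deriv ^^ k) (\<lambda>w. exp (G w)) z = exp (G z) * complete_bell (\<lambda>j. (deriv ^^ j) G z) k"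
proof (induction k rule: less_induct)
  case (less k)
  show ?case
  proof (cases k)
    case (Suc k')
    have hol_exp: "(\<lambda>w. exp (G w)) holomorphic_on W" using holo by (intro holomorphic_intros)
    have hol_deriv: "deriv G holomorphic_on W" using holo W by (rule holomorphic_deriv)
    have deriv_exp: "deriv (\<lambda>w. exp (G w)) w = deriv G w * exp (G w)" if "w \<in> W" for w
    proof -
      have "(G has_field_derivative deriv G w) (at w)"
        using holo W that
        by (meson DERIV_deriv_iff_field_differentiable holomorphic_on_imp_differentiable_at)
      then have "((\<lambda>w. exp (G w)) has_field_derivative exp (G w) * deriv G w) (at w)"
        by (auto intro!: derivative_eq_intros)
      then show ?thesis by (simp add: DERIV_imp_deriv mult.commute)
    qed
    have "(deriv ^^ k) (\<lambda>w. exp (G w)) z = (deriv ^^ k') (deriv (\<lambda>w. exp (G w))) z"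
      unfolding Suc by (simp add: funpow_Suc_right del: funpow.simps)
    also have "\<dots> = (deriv ^^ k') (\<lambda>w. deriv G w * exp (G w)) z"
      by (rule higher_deriv_transform_within_open[OF _ _ W z])
         (use hol_exp W hol_deriv deriv_exp in \<open>auto intro!: holomorphic_intros holomorphic_deriv\<close>)
    also have "\<dots> = (\<Sum>i = 0..k'. of_nat (k' choose i) * (deriv ^^ i) (deriv G) z *
                      (deriv ^^ (k' - i)) (\<lambda>w. exp (G w)) z)"
      by (rule higher_deriv_mult[OF hol_deriv hol_exp W z])
    also have "\<dots> = (\<Sum>i = 0..k'. of_nat (k' choose i) * (deriv ^^ Suc i) G z *
                      (exp (G z) * complete_bell (\<lambda>j. (deriv ^^ j) G z) (k' - i)))"
      by (intro sum.cong refl)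
         (use less Suc in \<open>auto simp: funpow_Suc_right simp del: funpow.simps\<close>)
    also have "\<dots> = exp (G z) * complete_bell (\<lambda>j. (deriv ^^ j) G z) k"
      unfolding Suc complete_bell.simps(2) sum_distrib_left
      by (intro sum.cong refl) (simp add: ac_simps)
    finally show ?thesis .
  qed simp
qed

lemma higher_deriv_of_real:
  fixes G :: "complex \<Rightarrow> complex" and h :: "real \<Rightarrow> real"
  assumes holo: "G holomorphic_on U" and U: "open U" and I: "open I"
    and IU: "\<And>x. x \<in> I \<Longrightarrow> complex_of_real x \<in> U"
    and eq: "\<And>x. x \<in> I \<Longrightarrow> G (of_real x) = of_real (h x)"
    and x: "x \<in> I"
  shows "(deriv ^^ k) G (of_real x) = of_real ((deriv ^^ k) h x)"
  using x
proof (induction k arbitrary: x)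
  case 0
  then show ?case using eq by simp
next
  case (Suc k x)
  define D where "D = deriv ((deriv ^^ k) G) (of_real x)"
  have "(deriv ^^ k) G holomorphic_on U" using holo U by (rule holomorphic_higher_deriv)
  then have "((deriv ^^ k) G has_field_derivative D) (at (of_real x))"
    unfolding D_def using U IU[OF Suc.prems]
    by (intro DERIV_deriv_iff_field_differentiable[THEN iffD2])
       (meson holomorphic_on_imp_differentiable_at)
  then have "((\<lambda>y. (deriv ^^ k) G (of_real y)) has_vector_derivative D) (at x)"
    by (rule has_vector_derivative_real_field)
  then have "((\<lambda>y. complex_of_real ((deriv ^^ k) h y)) has_vector_derivative D) (at x)"
    by (rule has_vector_derivative_transform_within_open[OF _ I Suc.prems]) (use Suc.IH in auto)
  then have re: "((deriv ^^ k) h has_field_derivative Re D) (at x)"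
    and im: "((\<lambda>y. 0) has_field_derivative Im D) (at x)"
    using has_field_derivative_Re has_field_derivative_Im by fastforce+
  have "Im D = 0" using DERIV_unique[OF im DERIV_const] .
  then have "D = of_real (Re D)" by (simp add: complex_eq_iff)
  moreover have "deriv ((deriv ^^ k) h) x = Re D" using re by (rule DERIV_imp_deriv)
  ultimately show ?case unfolding D_def by simp
qed

lemma power_div_fact_le_exp:
  assumes "(x::real) \<ge> 0"
  shows "x ^ k / fact k \<le> exp x"
proof -
  have "x ^ k / fact k = (\<Sum>i\<in>{k}. x ^ i / fact i)" by simp
  also have "\<dots> \<le> (\<Sum>i. x ^ i / fact i)"
    by (rule sum_le_suminf)
       (use summable_exp_generic[of x] assms in \<open>auto simp: divide_inverse_commute\<close>)
  also have "\<dots> = exp x" using exp_converges[of x] by (simp add: sums_iff divide_inverse_commute)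
  finally show ?thesis .
qed

lemma summable_pow_abs_if_summable_exp_abs:
  fixes p x :: "nat \<Rightarrow> real"
  assumes p: "\<And>n. p n \<ge> 0" and l: "l > 0"
    and exp_summable: "summable (\<lambda>n. p n * exp (l * \<bar>x n\<bar>))"
  shows "summable (\<lambda>n. p n * \<bar>x n\<bar> ^ k)"
proof (rule summable_comparison_test'[OF summable_mult[OF exp_summable, of "fact k / l ^ k"]])
  fix n
  have "(l * \<bar>x n\<bar>) ^ k / fact k \<le> exp (l * \<bar>x n\<bar>)"
    by (rule power_div_fact_le_exp) (use l in simp)
  then have "\<bar>x n\<bar> ^ k \<le> fact k / l ^ k * exp (l * \<bar>x n\<bar>)"
    using l by (simp add: field_simps power_mult_distrib)
  then have "p n * \<bar>x n\<bar> ^ k \<le> p n * (fact k / l ^ k * exp (l * \<bar>x n\<bar>))"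
    by (rule mult_left_mono[OF _ p])
  then show "norm (p n * \<bar>x n\<bar> ^ k) \<le> fact k / l ^ k * (p n * exp (l * \<bar>x n\<bar>))"
    using p[of n] by (simp add: abs_mult mult_ac)
qed

lemma has_sum_norm_exp_series:
  fixes z :: complex
  assumes "p \<ge> 0"
  shows "((\<lambda>k. norm (of_real p * (z * of_real x) ^ k / fact k)) has_sum p * exp (norm z * \<bar>x\<bar>)) UNIV"
proof -
  have norm_eq: "norm (of_real p * (z * of_real x) ^ k / fact k) = p * ((norm z * \<bar>x\<bar>) ^ k / fact k)" for k
  proof -
    have "norm (of_real p * (z * of_real x) ^ k / fact k) =
            norm (complex_of_real p) * (norm z * norm (complex_of_real x)) ^ k / norm (fact k :: complex)"
      by (simp only: norm_mult norm_divide norm_power)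
    then show ?thesis
      using assms by (simp only: norm_of_real norm_fact abs_of_nonneg times_divide_eq_right)
  qed
  have "(\<lambda>k. (norm z * \<bar>x\<bar>) ^ k / fact k) sums exp (norm z * \<bar>x\<bar>)"
    using exp_converges[of "norm z * \<bar>x\<bar>"] by (simp add: divide_inverse_commute)
  then have "(\<lambda>k. norm (of_real p * (z * of_real x) ^ k / fact k)) sums (p * exp (norm z * \<bar>x\<bar>))"
    unfolding norm_eq by (rule sums_mult)
  then show ?thesis by (rule sums_nonneg_imp_has_sum) simp
qed

lemma has_sum_moment_term:
  fixes p x :: "nat \<Rightarrow> real" and z :: complex
  assumes p: "\<And>n. p n \<ge> 0" and pow_summable: "summable (\<lambda>n. p n * \<bar>x n\<bar> ^ k)"
  shows "((\<lambda>n. of_real (p n) * (z * of_real (x n)) ^ k / fact k) has_sum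
            of_real (\<Sum>n. p n * x n ^ k) / fact k * z ^ k) UNIV"
proof -
  have "((\<lambda>n. complex_of_real (p n * x n ^ k)) has_sum of_real (\<Sum>n. p n * x n ^ k)) UNIV"
  proof (intro norm_summable_imp_has_sum sums_of_real summable_sums)
    show "summable (\<lambda>n. p n * x n ^ k)"
      by (rule summable_comparison_test'[OF pow_summable]) (simp add: abs_mult power_abs p)
    show "summable (\<lambda>n. norm (complex_of_real (p n * x n ^ k)))"
      unfolding norm_of_real using pow_summable p by (simp add: abs_mult power_abs)
  qed
  then have "((\<lambda>n. z ^ k / fact k * complex_of_real (p n * x n ^ k)) has_sum
               z ^ k / fact k * of_real (\<Sum>n. p n * x n ^ k)) UNIV"
    by (rule has_sum_cmult_right)
  then show ?thesis by (simp add: power_mult_distrib mult_ac)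
qed

text \<open>Expanding \<open>exp\<close> inside the sum and exchanging the two summations, which is justified
  by the absolute convergence of \<open>\<Sum>n. p n * exp (\<bar>z\<bar> * \<bar>x n\<bar>)\<close>.\<close>

lemma sums_moment_series:
  fixes p x :: "nat \<Rightarrow> real" and z :: complex
  assumes p: "\<And>n. p n \<ge> 0"
    and exp_summable: "summable (\<lambda>n. p n * exp (norm z * \<bar>x n\<bar>))"
    and pow_summable: "\<And>k. summable (\<lambda>n. p n * \<bar>x n\<bar> ^ k)"
  shows "(\<lambda>k. of_real (\<Sum>n. p n * x n ^ k) / fact k * z ^ k) sums
           (\<Sum>n. of_real (p n) * exp (z * of_real (x n)))"
proof -
  define T where "T = (\<lambda>(n, k). of_real (p n) * (z * of_real (x n)) ^ k / fact k :: complex)"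
  have row_norm: "((\<lambda>k. norm (T (n, k))) has_sum p n * exp (norm z * \<bar>x n\<bar>)) UNIV" for n
    unfolding T_def using has_sum_norm_exp_series[OF p] by simp
  have "(\<lambda>n. p n * exp (norm z * \<bar>x n\<bar>)) summable_on UNIV"
    using exp_summable p by (subst summable_on_UNIV_nonneg_real_iff) auto
  then have "(\<lambda>nk. norm (T nk)) summable_on UNIV \<times> UNIV"
    by (intro summable_on_SigmaI[where f = "\<lambda>nk. norm (T nk)", OF row_norm]) auto
  then obtain S where S: "(T has_sum S) (UNIV \<times> UNIV)"
    using abs_summable_summable has_sum_infsum by blast
  have row: "((\<lambda>k. T (n, k)) has_sum of_real (p n) * exp (z * of_real (x n))) UNIV" for n
  proof (rule norm_summable_imp_has_sum)
    show "summable (\<lambda>k. norm (T (n, k)))"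
      using has_sum_imp_sums[OF row_norm[of n]] by (simp add: sums_iff)
    have "(\<lambda>k. of_real (p n) * ((z * of_real (x n)) ^ k /\<^sub>R fact k)) sums
            (of_real (p n) * exp (z * of_real (x n)))"
      by (intro sums_mult exp_converges)
    then show "(\<lambda>k. T (n, k)) sums (of_real (p n) * exp (z * of_real (x n)))"
      unfolding T_def by (simp add: scaleR_conv_of_real divide_inverse_commute mult_ac)
  qed
  have "((\<lambda>n. of_real (p n) * exp (z * of_real (x n))) has_sum S) UNIV"
    by (rule has_sum_SigmaD[OF _ row]) (use S in simp)
  then have sum_eq: "(\<Sum>n. of_real (p n) * exp (z * of_real (x n))) = S"
    using has_sum_imp_sums sums_iff by blast
  have "((\<lambda>k. of_real (\<Sum>n. p n * x n ^ k) / fact k * z ^ k) has_sum S) UNIV"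
  proof (rule has_sum_SigmaD[where f = "\<lambda>(k, n). T (n, k)" and B = "\<lambda>_. UNIV"])
    show "((\<lambda>(k, n). T (n, k)) has_sum S) (SIGMA k:UNIV. UNIV)"
      using S by (subst (asm) has_sum_swap) simp
  qed (use has_sum_moment_term[OF p pow_summable] in \<open>simp add: T_def\<close>)
  then show ?thesis
    unfolding sum_eq by (rule has_sum_imp_sums)
qed

section \<open>The method of moments for the standard normal law\<close>

lemma norm_char_diff_le_moments:
  fixes t :: real and k :: nat
  assumes M: "real_distribution M" and N: "real_distribution N" and k: "even k"
    and M_int: "\<And>i. integrable M (\<lambda>x. x ^ i)" and N_int: "\<And>i. integrable N (\<lambda>x. x ^ i)"
  shows "cmod (char M t - char N t) \<le>
           cmod (\<Sum>i\<le>k. (\<i> * t) ^ i / fact i *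
                   of_real ((LINT x|M. x ^ i) - (LINT x|N. x ^ i))) +
           2 * \<bar>t\<bar> ^ k / fact k * ((LINT x|M. x ^ k) + (LINT x|N. x ^ k))"
proof -
  let ?P = "\<lambda>M. \<Sum>i\<le>k. (\<i> * complex_of_real t) ^ i / fact i * complex_of_real (LINT x|M. x ^ i)"
  have abs_k: "(\<lambda>x::real. \<bar>x\<bar> ^ k) = (\<lambda>x. x ^ k)" using k by (simp add: power_even_abs)
  have taylor_M: "cmod (char M t - ?P M) \<le> 2 * \<bar>t\<bar> ^ k / fact k * (LINT x|M. x ^ k)"
    using real_distribution.char_approx1[OF M M_int, where n = k and t = t] by (simp add: abs_k)
  have taylor_N: "cmod (char N t - ?P N) \<le> 2 * \<bar>t\<bar> ^ k / fact k * (LINT x|N. x ^ k)"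
    using real_distribution.char_approx1[OF N N_int, where n = k and t = t] by (simp add: abs_k)
  have diff_P: "?P M - ?P N = (\<Sum>i\<le>k. (\<i> * t) ^ i / fact i *
                         of_real ((LINT x|M. x ^ i) - (LINT x|N. x ^ i)))"
    unfolding sum_subtractf[symmetric] by (intro sum.cong refl) (simp add: right_diff_distrib)
  have triangle: "cmod (char M t - char N t) \<le>
                   cmod (char M t - ?P M) + cmod (?P M - ?P N) + cmod (char N t - ?P N)"
  proof -
    have "cmod (char M t - char N t) =
            cmod ((char M t - ?P M) + (?P M - ?P N) - (char N t - ?P N))"
      by (simp add: algebra_simps)
    also have "\<dots> \<le> cmod ((char M t - ?P M) + (?P M - ?P N)) + cmod (char N t - ?P N)"
      by (rule norm_triangle_ineq4)
    also have "\<dots> \<le> cmod (char M t - ?P M) + cmod (?P M - ?P N) + cmod (char N t - ?P N)"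
      by (intro add_right_mono norm_triangle_ineq)
    finally show ?thesis .
  qed
  show ?thesis
    using triangle taylor_M taylor_N unfolding diff_P distrib_left by linarith
qed

text \<open>The Taylor remainder bound for the normal characteristic function tends to zero: this is
  where the normal law is determined by its moments.\<close>

lemma std_normal_moment_remainder_tendsto_0:
  "(\<lambda>j. \<bar>t\<bar> ^ (2 * j) / fact (2 * j) * (LINT x|std_normal_distribution. x ^ (2 * j)))
     \<longlonglongrightarrow> 0"
proof -
  have eq: "\<bar>t\<bar> ^ (2 * j) / fact (2 * j) * (LINT x|std_normal_distribution. x ^ (2 * j)) =
              (t ^ 2 / 2) ^ j / fact j" for j
  proof -
    have abs_pow: "\<bar>t\<bar> ^ (2 * j) = (t ^ 2) ^ j" by (simp add: power_mult power_even_abs)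
    have "fact (2 * j) \<noteq> (0::real)" by simp
    then have "\<bar>t\<bar> ^ (2 * j) / fact (2 * j) * (LINT x|std_normal_distribution. x ^ (2 * j)) =
               (t ^ 2) ^ j / (2 ^ j * fact j)"
      unfolding std_normal_distribution_even_moments(1) abs_pow by simp
    also have "\<dots> = (t ^ 2 / 2) ^ j / fact j" by (simp add: power_divide)
    finally show ?thesis .
  qed
  have "summable (\<lambda>j. (t ^ 2 / 2) ^ j / fact j)"
    using summable_exp[of "t ^ 2 / 2"] by (simp only: divide_inverse_commute)
  then show ?thesis
    unfolding eq by (rule summable_LIMSEQ_zero)
qed

theorem weak_conv_std_normal_if_moments:
  fixes M :: "nat \<Rightarrow> real measure"
  assumes M: "\<And>n. real_distribution (M n)"
    and M_int: "\<And>n k. integrable (M n) (\<lambda>x. x ^ k)"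
    and moments: "\<And>k. (\<lambda>n. LINT x|M n. x ^ k) \<longlonglongrightarrow> (LINT x|std_normal_distribution. x ^ k)"
  shows "weak_conv_m M std_normal_distribution"
proof (rule levy_continuity[OF M real_dist_normal_dist])
  fix t :: real
  let ?N = std_normal_distribution
  let ?rem = "\<lambda>j. \<bar>t\<bar> ^ (2 * j) / fact (2 * j) * (LINT x|?N. x ^ (2 * j))"
  show "(\<lambda>n. char (M n) t) \<longlonglongrightarrow> char ?N t"
  proof (rule tendstoI)
    fix e :: real assume e: "e > 0"
    obtain j where j: "?rem j < e / 4"
      using order_tendstoD(2)[OF std_normal_moment_remainder_tendsto_0[of t], of "e / 4"] e
      by (auto dest: eventually_happens)
    define k where "k = 2 * j"
    let ?bound = "\<lambda>n. cmod (\<Sum>i\<le>k. (\<i> * t) ^ i / fact i *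
                       of_real ((LINT x|M n. x ^ i) - (LINT x|?N. x ^ i))) +
                     2 * \<bar>t\<bar> ^ k / fact k * ((LINT x|M n. x ^ k) + (LINT x|?N. x ^ k))"
    have limit: "cmod (\<Sum>i\<le>k. (\<i> * t) ^ i / fact i *
                       of_real ((LINT x|?N. x ^ i) - (LINT x|?N. x ^ i))) +
                     2 * \<bar>t\<bar> ^ k / fact k * ((LINT x|?N. x ^ k) + (LINT x|?N. x ^ k)) =
                   4 * ?rem j"
      by (simp add: k_def)
    have "?bound \<longlonglongrightarrow> 4 * ?rem j"
      unfolding limit [symmetric]
      by (intro tendsto_add tendsto_norm tendsto_sum tendsto_mult tendsto_of_real tendsto_diff
                tendsto_const moments)
    then have "eventually (\<lambda>n. ?bound n < e) sequentially"
      by (rule order_tendstoD(2)) (use j in linarith)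
    then show "eventually (\<lambda>n. dist (char (M n) t) (char ?N t) < e) sequentially"
    proof eventually_elim
      case (elim n)
      then show ?case
        using norm_char_diff_le_moments[OF M real_dist_normal_dist _ M_int
                integrable_std_normal_distribution_moment, of k n t]
        by (simp add: k_def dist_norm)
    qed
  qed
qed

lemma isCont_cdf_std_normal: "isCont (cdf std_normal_distribution) x"
proof -
  have "emeasure std_normal_distribution {x} =
          (\<integral>\<^sup>+ y. ennreal (std_normal_density y) * indicator {x} y \<partial>lborel)"
    by (subst emeasure_density) (auto simp: nn_integral_set_ennreal)
  also have "\<dots> = (\<integral>\<^sup>+ y. ennreal (std_normal_density x) * indicator {x} y \<partial>lborel)"
    by (intro nn_integral_cong) (auto simp: indicator_def)
  also have "\<dots> = 0" by (subst nn_integral_cmult_indicator) auto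
  finally have "measure std_normal_distribution {x} = 0" by (simp add: measure_def)
  then show ?thesis
    using finite_borel_measure.isCont_cdf[OF real_distribution.finite_borel_measure_M[OF
            real_dist_normal_dist]]
    by simp
qed

lemma tendsto_up_to_sequentially:
  fixes f :: "real \<Rightarrow> 'a::first_countable_topology"
  assumes R: "R > 0"
    and seq: "\<And>T. filterlim T (up_to R) sequentially \<Longrightarrow> (\<lambda>n. f (T n)) \<longlonglongrightarrow> L"
  shows "(f \<longlongrightarrow> L) (up_to R)"
proof (cases R)
  case (real r)
  then have "r > 0" using R by simp
  have up_to: "up_to R = at_left r" by (simp add: up_to_def real)
  show ?thesis unfolding up_to
  proof (rule tendsto_at_left_sequentially[OF \<open>r > 0\<close>])
    fix T :: "nat \<Rightarrow> real"
    assume "\<And>n. T n < r" "\<And>n. 0 < T n" "incseq T" "T \<longlonglongrightarrow> r"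
    then have "filterlim T (at_left r) sequentially"
      by (intro tendsto_imp_filterlim_at_left) auto
    then show "(\<lambda>n. f (T n)) \<longlonglongrightarrow> L" using seq unfolding up_to by blast
  qed
next
  case PInf
  then have up_to: "up_to R = at_top" by (simp add: up_to_def)
  show ?thesis unfolding up_to
  proof (rule tendsto_at_topI_sequentially)
    fix T :: "nat \<Rightarrow> real"
    assume "filterlim T at_top sequentially"
    then show "(\<lambda>n. f (T n)) \<longlonglongrightarrow> L" using seq unfolding up_to by blast
  qed
next
  case MInf
  then show ?thesis using R by simp
qed

lemma eventually_up_to:
  assumes R: "R > 0"
  shows "eventually (\<lambda>t. 0 < t \<and> ereal t < R) (up_to R)"
proof (cases R)
  case (real r)
  have "eventually (\<lambda>t. t \<in> {0<..<r}) (at_left r)"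
    using R real by (intro eventually_at_left_real) simp
  moreover have "up_to R = at_left r" by (simp add: up_to_def real)
  ultimately show ?thesis
    by (simp add: real)
next
  case PInf
  have "eventually (\<lambda>t::real. 0 < t) at_top" by (rule eventually_gt_at_top)
  moreover have "up_to R = at_top" by (simp add: up_to_def PInf)
  ultimately show ?thesis
    by (simp add: PInf)
next
  case MInf
  then show ?thesis using R by simp
qed

lemma filterlim_ln_up_to:
  assumes R: "R > 0"
  shows "filterlim ln (up_to_ln R) (up_to R)"
proof (cases R)
  case (real r)
  then have r: "r > 0" using R by simp
  have "(ln \<longlongrightarrow> ln r) (at_left r)"
    using tendsto_ln[OF tendsto_ident_at[of r "{..<r}"]] r by simp
  moreover have "eventually (\<lambda>x. ln x < ln r) (at_left r)"
    using eventually_at_left_real[OF r] by eventually_elim auto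
  ultimately have "filterlim ln (at_left (ln r)) (at_left r)"
    by (rule tendsto_imp_filterlim_at_left)
  then show ?thesis by (simp add: up_to_def up_to_ln_def real)
next
  case PInf
  then show ?thesis using ln_at_top by (simp add: up_to_def up_to_ln_def)
next
  case MInf
  then show ?thesis using R by simp
qed

definition khinchin_std :: "(nat \<Rightarrow> real) \<Rightarrow> real \<Rightarrow> nat \<Rightarrow> real" where
  "khinchin_std a t n = (real n - khinchin_mean a t) / sqrt (khinchin_var a t)"

definition khinchin_moment :: "(nat \<Rightarrow> real) \<Rightarrow> real \<Rightarrow> nat \<Rightarrow> real" where
  "khinchin_moment a t k = (\<Sum>n. khinchin_prob a t n * khinchin_std a t n ^ k)"

lemma summable_pser:
  "ereal \<bar>x\<bar> < conv_radius a \<Longrightarrow> summable (\<lambda>n. a n * x ^ n)"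
  by (rule summable_in_conv_radius) simp

context
  fixes a :: "nat \<Rightarrow> real"
  assumes K: "in_class_K a"
begin

lemma in_class_K_nonneg: "a n \<ge> 0"
  using K by (simp add: in_class_K_def)

lemma in_class_K_conv_radius_pos: "conv_radius a > 0"
  using K by (simp add: in_class_K_def)

lemma pser_pos:
  assumes "0 \<le> x" "ereal x < conv_radius a"
  shows "pser a x > 0"
proof -
  have "summable (\<lambda>n. a n * x ^ n)" using assms by (intro summable_pser) simp
  from sum_le_suminf[OF this, of "{0}"] have "a 0 * x ^ 0 \<le> pser a x"
    unfolding pser_def using assms in_class_K_nonneg by simp
  then show ?thesis using K by (simp add: in_class_K_def)
qed

context
  fixes t :: real
  assumes t: "0 < t" "ereal t < conv_radius a"
begin

lemma khinchin_prob_nonneg: "khinchin_prob a t n \<ge> 0"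
  unfolding khinchin_prob_def using in_class_K_nonneg[of n] t pser_pos[of t] by simp

lemma summable_khinchin_prob: "summable (khinchin_prob a t)"
  unfolding khinchin_prob_def using t by (intro summable_divide summable_pser) simp

lemma suminf_khinchin_prob: "(\<Sum>n. khinchin_prob a t n) = 1"
  unfolding khinchin_prob_def using t pser_pos[of t]
  by (subst suminf_divide) (auto intro: summable_pser simp: pser_def)

text \<open>Tilting the Khinchin family by \<open>exp l\<close> amounts to moving from \<open>t\<close> to \<open>t * exp l\<close>.\<close>

lemma summable_khinchin_prob_exp:
  assumes "ereal (t * exp l) < conv_radius a"
  shows "summable (\<lambda>n. khinchin_prob a t n * exp (l * (real n - c)))"
proof -
  have tilt: "khinchin_prob a t n * exp (l * (real n - c)) =
                a n * (t * exp l) ^ n * (exp (- l * c) / pser a t)" for n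
    by (simp add: khinchin_prob_def algebra_simps exp_diff exp_of_nat_mult[symmetric]
                  power_mult_distrib exp_minus divide_inverse)
  have "summable (\<lambda>n. a n * (t * exp l) ^ n)"
    using assms t by (intro summable_pser) simp
  then show ?thesis unfolding tilt by (rule summable_mult2)
qed

lemma summable_khinchin_prob_exp_abs:
  assumes "ereal (t * exp l) < conv_radius a" "l \<ge> 0"
  shows "summable (\<lambda>n. khinchin_prob a t n * exp (l * \<bar>real n - c\<bar>))"
proof (rule summable_comparison_test'[OF summable_add[OF summable_khinchin_prob_exp[OF assms(1)]
                                                          summable_khinchin_prob_exp[of "- l"]]])
  have "t * exp (- l) \<le> t" using t assms(2) by (simp add: mult_le_cancel_left1)
  then show "ereal (t * exp (- l)) < conv_radius a"
    using t(2) by (meson ereal_less_eq(3) order_le_less_trans)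
  fix n
  have "exp (l * \<bar>y\<bar>) \<le> exp (l * y) + exp (- l * y)" for y
    by (cases "y \<ge> 0") (simp_all add: add_increasing add_increasing2)
  then have "exp (l * \<bar>real n - c\<bar>) \<le> exp (l * (real n - c)) + exp (- l * (real n - c))" .
  then show "norm (khinchin_prob a t n * exp (l * \<bar>real n - c\<bar>)) \<le>
      khinchin_prob a t n * exp (l * (real n - c)) + khinchin_prob a t n * exp (- l * (real n - c))"
    using khinchin_prob_nonneg[of n] by (simp add: mult_left_mono distrib_left[symmetric])
qed

lemma summable_khinchin_prob_pow_abs:
  "summable (\<lambda>n. khinchin_prob a t n * \<bar>real n - c\<bar> ^ k)"
proof -
  obtain r where r: "ereal t < ereal r" "ereal r < conv_radius a"
    using ereal_dense2[OF t(2)] by blast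
  have "t * exp (ln (r / t)) = r" "ln (r / t) > 0"
    using r t by auto
  then show ?thesis
    using r(2) by (intro summable_pow_abs_if_summable_exp_abs[OF khinchin_prob_nonneg _
                    summable_khinchin_prob_exp_abs[of "ln (r / t)"]]) auto
qed

lemma summable_khinchin_prob_pow:
  "summable (\<lambda>n. khinchin_prob a t n * (real n - c) ^ k)"
  by (rule summable_comparison_test'[OF summable_khinchin_prob_pow_abs[of c k]])
     (simp add: abs_mult power_abs khinchin_prob_nonneg)

lemma suminf_khinchin_prob_centered: "(\<Sum>n. khinchin_prob a t n * (real n - khinchin_mean a t)) = 0"
proof -
  have "(\<lambda>n. khinchin_prob a t n * (real n - khinchin_mean a t)) =
          (\<lambda>n. real n * khinchin_prob a t n - khinchin_mean a t * khinchin_prob a t n)"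
    by (auto simp: algebra_simps)
  moreover have "summable (\<lambda>n. real n * khinchin_prob a t n)"
    using summable_khinchin_prob_pow[of 0 1] by (simp add: mult.commute)
  ultimately have "(\<Sum>n. khinchin_prob a t n * (real n - khinchin_mean a t)) =
          (\<Sum>n. real n * khinchin_prob a t n) - (\<Sum>n. khinchin_mean a t * khinchin_prob a t n)"
    using summable_khinchin_prob by (simp add: suminf_diff summable_mult)
  also have "\<dots> = 0"
    using suminf_khinchin_prob summable_khinchin_prob
    by (subst suminf_mult) (auto simp: khinchin_mean_def)
  finally show ?thesis .
qed

lemma khinchin_var_eq: "khinchin_var a t = (\<Sum>n. khinchin_prob a t n * (real n - khinchin_mean a t) ^ 2)"
  unfolding khinchin_var_def by (simp add: mult.commute)

text \<open>The variance is positive because two distinct values \<open>0\<close> and \<open>n\<^sub>0\<close> carry positive mass.\<close>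

lemma khinchin_var_pos: "khinchin_var a t > 0"
proof -
  obtain n0 where n0: "n0 > 0" "a n0 \<noteq> 0" using K by (auto simp: in_class_K_def)
  have "a n0 > 0" using n0 in_class_K_nonneg[of n0] by simp
  then have pos: "khinchin_prob a t 0 > 0" "khinchin_prob a t n0 > 0"
    unfolding khinchin_prob_def using K t pser_pos[of t] by (auto simp: in_class_K_def)
  have "real 0 \<noteq> khinchin_mean a t \<or> real n0 \<noteq> khinchin_mean a t" using n0 by auto
  then obtain i where i: "khinchin_prob a t i * (real i - khinchin_mean a t) ^ 2 > 0"
    using pos by (metis mult_pos_pos right_minus_eq zero_less_power2)
  also have "\<dots> \<le> (\<Sum>n. khinchin_prob a t n * (real n - khinchin_mean a t) ^ 2)"
    using sum_le_suminf[OF summable_khinchin_prob_pow, of "{i}"] khinchin_prob_nonneg by simp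
  finally show ?thesis by (simp add: khinchin_var_eq)
qed

lemma khinchin_std_pow:
  "khinchin_std a t n ^ k = (real n - khinchin_mean a t) ^ k / sqrt (khinchin_var a t) ^ k"
  by (simp add: khinchin_std_def power_divide)

lemma summable_khinchin_prob_std_pow_abs:
  "summable (\<lambda>n. khinchin_prob a t n * \<bar>khinchin_std a t n\<bar> ^ k)"
  unfolding khinchin_std_def abs_divide power_divide times_divide_eq_right
  by (rule summable_divide[OF summable_khinchin_prob_pow_abs])

lemma khinchin_moment_1: "khinchin_moment a t 1 = 0"
  unfolding khinchin_moment_def khinchin_std_pow
  using suminf_divide[OF summable_khinchin_prob_pow[of _ 1]] suminf_khinchin_prob_centered
  by simp

lemma khinchin_moment_2: "khinchin_moment a t 2 = 1"
  unfolding khinchin_moment_def khinchin_std_pow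
  using suminf_divide[OF summable_khinchin_prob_pow[of _ 2]] khinchin_var_pos
  by (simp add: khinchin_var_eq[symmetric])

lemma sums_khinchin_moment_series:
  fixes z :: complex
  assumes "ereal (t * exp (norm z / sqrt (khinchin_var a t))) < conv_radius a"
  shows "(\<lambda>k. of_real (khinchin_moment a t k) / fact k * z ^ k) sums
           (\<Sum>n. of_real (khinchin_prob a t n) * exp (z * of_real (khinchin_std a t n)))"
  unfolding khinchin_moment_def
proof (rule sums_moment_series[OF khinchin_prob_nonneg _ summable_khinchin_prob_std_pow_abs])
  have "norm z * \<bar>khinchin_std a t n\<bar> =
          norm z / sqrt (khinchin_var a t) * \<bar>real n - khinchin_mean a t\<bar>" for n
    using khinchin_var_pos by (simp add: khinchin_std_def abs_divide)
  moreover have "summable (\<lambda>n. khinchin_prob a t n *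
                   exp (norm z / sqrt (khinchin_var a t) * \<bar>real n - khinchin_mean a t\<bar>))"
    by (rule summable_khinchin_prob_exp_abs[OF assms]) (use khinchin_var_pos in simp)
  ultimately show "summable (\<lambda>n. khinchin_prob a t n * exp (norm z * \<bar>khinchin_std a t n\<bar>))"
    by simp
qed

end

end

section \<open>The fulcrum in the complex domain\<close>

definition complex_fps :: "(nat \<Rightarrow> real) \<Rightarrow> complex fps" where
  "complex_fps a = Abs_fps (\<lambda>n. of_real (a n))"

definition fulcrum_complex :: "(nat \<Rightarrow> real) \<Rightarrow> complex \<Rightarrow> complex" where
  "fulcrum_complex a z = ln (eval_fps (complex_fps a) (exp z))"

definition fulcrum_domain :: "(nat \<Rightarrow> real) \<Rightarrow> complex set" where
  "fulcrum_domain a = exp -` eball 0 (conv_radius a) \<inter>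
     (\<lambda>z. eval_fps (complex_fps a) (exp z)) -` {w. Re w > 0}"

lemma fps_conv_radius_complex_fps: "fps_conv_radius (complex_fps a) = conv_radius a"
  unfolding fps_conv_radius_def complex_fps_def by (auto intro: conv_radius_cong)

lemma holomorphic_eval_complex_fps_exp:
  "(\<lambda>z. eval_fps (complex_fps a) (exp z)) holomorphic_on exp -` eball 0 (conv_radius a)"
proof -
  have "(eval_fps (complex_fps a) \<circ> exp) holomorphic_on exp -` eball 0 (conv_radius a)"
    by (rule holomorphic_on_compose_gen[where t = "eball 0 (conv_radius a)"])
       (auto intro!: holomorphic_intros simp: fps_conv_radius_complex_fps)
  then show ?thesis by (simp add: o_def)
qed

lemma open_fulcrum_domain: "open (fulcrum_domain a)"
  unfolding fulcrum_domain_def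
  by (intro continuous_open_preimage holomorphic_on_imp_continuous_on
            holomorphic_eval_complex_fps_exp continuous_open_vimage open_halfspace_Re_gt)
     (auto intro: continuous_intros)

lemma holomorphic_fulcrum_complex: "fulcrum_complex a holomorphic_on fulcrum_domain a"
proof -
  have "(ln \<circ> (\<lambda>z. eval_fps (complex_fps a) (exp z))) holomorphic_on fulcrum_domain a"
  proof (rule holomorphic_on_compose_gen)
    show "(\<lambda>z. eval_fps (complex_fps a) (exp z)) holomorphic_on fulcrum_domain a"
      by (rule holomorphic_on_subset[OF holomorphic_eval_complex_fps_exp])
         (auto simp: fulcrum_domain_def)
    show "ln holomorphic_on {w. Re w > 0}"
      by (rule holomorphic_on_Ln) (auto simp: complex_nonpos_Reals_iff)
  qed (auto simp: fulcrum_domain_def)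
  then show ?thesis by (simp add: o_def fulcrum_complex_def [abs_def])
qed

lemma eval_complex_fps_of_real:
  assumes "ereal \<bar>x\<bar> < conv_radius a"
  shows "eval_fps (complex_fps a) (of_real x) = of_real (pser a x)"
proof -
  have "summable (\<lambda>n. a n * x ^ n)" by (rule summable_in_conv_radius) (use assms in simp)
  then show ?thesis
    unfolding eval_fps_def complex_fps_def pser_def by (simp add: suminf_of_real)
qed

lemma
  assumes K: "in_class_K a" and x: "ereal (exp x) < conv_radius a"
  shows of_real_in_fulcrum_domain: "complex_of_real x \<in> fulcrum_domain a"
    and fulcrum_complex_of_real: "fulcrum_complex a (of_real x) = of_real (fulcrum a x)"
proof -
  have eval: "eval_fps (complex_fps a) (exp (of_real x)) = of_real (pser a (exp x))"
    unfolding exp_of_real by (rule eval_complex_fps_of_real) (use x in simp)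
  have "pser a (exp x) > 0" by (rule pser_pos[OF K]) (use x in auto)
  then show "complex_of_real x \<in> fulcrum_domain a" "fulcrum_complex a (of_real x) = of_real (fulcrum a x)"
    using x by (simp_all add: fulcrum_domain_def eval fulcrum_complex_def fulcrum_def Ln_of_real)
qed

lemma higher_deriv_fulcrum_complex:
  assumes K: "in_class_K a" and x: "ereal (exp x) < conv_radius a"
  shows "(deriv ^^ k) (fulcrum_complex a) (of_real x) = of_real ((deriv ^^ k) (fulcrum a) x)"
proof -
  obtain r where r: "ereal (exp x) < ereal r" "ereal r < conv_radius a"
    using ereal_dense2[OF x] by blast
  then have "exp x < r" by simp
  then have "0 < r" using exp_gt_zero order.strict_trans by blast
  have inside: "ereal (exp y) < conv_radius a" if "y < ln r" for y
  proof -
    have "exp y < exp (ln r)" using that by simp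
    then have "ereal (exp y) < ereal r" using \<open>0 < r\<close> by simp
    then show ?thesis using r(2) by (rule order.strict_trans)
  qed
  show ?thesis
  proof (rule higher_deriv_of_real[OF holomorphic_fulcrum_complex open_fulcrum_domain open_lessThan])
    have "exp x < exp (ln r)" using \<open>exp x < r\<close> \<open>0 < r\<close> by simp
    then show "x \<in> {..<ln r}" by simp
    show "complex_of_real y \<in> fulcrum_domain a" if "y \<in> {..<ln r}" for y
      using that inside of_real_in_fulcrum_domain[OF K] by simp
    show "fulcrum_complex a (of_real y) = of_real (fulcrum a y)" if "y \<in> {..<ln r}" for y
      using that inside fulcrum_complex_of_real[OF K] by simp
  qed
qed

section \<open>The cumulant generating function of the standardized variable\<close>

definition khinchin_std_cgf :: "(nat \<Rightarrow> real) \<Rightarrow> real \<Rightarrow> complex \<Rightarrow> complex" where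
  "khinchin_std_cgf a t z =
     fulcrum_complex a (of_real (1 / sqrt (khinchin_var a t)) * z + of_real (ln t))
     - fulcrum_complex a (of_real (ln t))
     - of_real (khinchin_mean a t / sqrt (khinchin_var a t)) * z"

definition std_cgf_domain :: "(nat \<Rightarrow> real) \<Rightarrow> real \<Rightarrow> complex set" where
  "std_cgf_domain a t =
     (\<lambda>z. of_real (1 / sqrt (khinchin_var a t)) * z + of_real (ln t)) -` fulcrum_domain a"

definition khinchin_std_cumulant :: "(nat \<Rightarrow> real) \<Rightarrow> real \<Rightarrow> nat \<Rightarrow> real" where
  "khinchin_std_cumulant a t j =
     (deriv ^^ j) (fulcrum a) (ln t) / sqrt (khinchin_var a t) ^ j
     - (if j = 1 then khinchin_mean a t / sqrt (khinchin_var a t) else 0)"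

context
  fixes a :: "nat \<Rightarrow> real" and t :: real
  assumes K: "in_class_K a" and t: "0 < t" "ereal t < conv_radius a"
begin

lemma open_std_cgf_domain: "open (std_cgf_domain a t)"
  unfolding std_cgf_domain_def
  by (rule continuous_open_vimage[OF open_fulcrum_domain]) (intro continuous_intros)

lemma zero_in_std_cgf_domain: "0 \<in> std_cgf_domain a t"
  using of_real_in_fulcrum_domain[OF K, of "ln t"] t by (simp add: std_cgf_domain_def)

lemma holomorphic_fulcrum_complex_affine:
  "(\<lambda>z. fulcrum_complex a (of_real (1 / sqrt (khinchin_var a t)) * z + of_real (ln t)))
     holomorphic_on std_cgf_domain a t"
  by (rule holomorphic_on_compose_gen[OF _ holomorphic_fulcrum_complex, unfolded o_def])
     (auto intro!: holomorphic_intros simp: std_cgf_domain_def)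

lemma holomorphic_khinchin_std_cgf: "khinchin_std_cgf a t holomorphic_on std_cgf_domain a t"
  unfolding khinchin_std_cgf_def [abs_def]
  by (intro holomorphic_intros holomorphic_fulcrum_complex_affine)

lemma khinchin_std_cgf_0: "khinchin_std_cgf a t 0 = 0"
  by (simp add: khinchin_std_cgf_def)

lemma higher_deriv_khinchin_std_cgf:
  assumes "j \<ge> 1"
  shows "(deriv ^^ j) (khinchin_std_cgf a t) 0 = of_real (khinchin_std_cumulant a t j)"
proof -
  define u where "u = complex_of_real (1 / sqrt (khinchin_var a t))"
  define c where "c = complex_of_real (ln t)"
  define \<mu> where "\<mu> = complex_of_real (khinchin_mean a t / sqrt (khinchin_var a t))"
  note W = open_std_cgf_domain zero_in_std_cgf_domain
  have holo: "(\<lambda>z. fulcrum_complex a (u * z + c)) holomorphic_on std_cgf_domain a t"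
    using holomorphic_fulcrum_complex_affine unfolding u_def c_def .
  have "(deriv ^^ j) (khinchin_std_cgf a t) 0 =
      (deriv ^^ j) (\<lambda>z. fulcrum_complex a (u * z + c) - fulcrum_complex a c) 0 -
      (deriv ^^ j) (\<lambda>z. \<mu> * z) 0"
    unfolding khinchin_std_cgf_def [abs_def] u_def [symmetric] c_def [symmetric] \<mu>_def [symmetric]
    by (rule higher_deriv_diff[OF _ _ W]) (intro holomorphic_intros holo)+
  also have "(deriv ^^ j) (\<lambda>z. fulcrum_complex a (u * z + c) - fulcrum_complex a c) 0 =
      (deriv ^^ j) (\<lambda>z. fulcrum_complex a (u * z + c)) 0"
    using higher_deriv_diff[OF holo _ W, where g = "\<lambda>_. fulcrum_complex a c" and n = j] assms
    by simp
  also have "\<dots> = u ^ j * (deriv ^^ j) (fulcrum_complex a) c"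
    using higher_deriv_compose_linear'[OF holomorphic_fulcrum_complex open_std_cgf_domain
            open_fulcrum_domain zero_in_std_cgf_domain, where u = u and c = c and n = j]
    by (simp add: std_cgf_domain_def u_def c_def)
  also have "(deriv ^^ j) (fulcrum_complex a) c = of_real ((deriv ^^ j) (fulcrum a) (ln t))"
    unfolding c_def using t by (intro higher_deriv_fulcrum_complex[OF K]) simp
  also have "(deriv ^^ j) (\<lambda>z. \<mu> * z) 0 = (if j = 1 then \<mu> else 0)"
    using assms by simp
  finally have "(deriv ^^ j) (khinchin_std_cgf a t) 0 =
      u ^ j * of_real ((deriv ^^ j) (fulcrum a) (ln t)) - (if j = 1 then \<mu> else 0)" .
  then show ?thesis
    by (simp add: khinchin_std_cumulant_def u_def \<mu>_def power_divide)
qed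

lemma exp_khinchin_std_cgf:
  assumes z: "z \<in> std_cgf_domain a t"
  shows "exp (khinchin_std_cgf a t z) =
           (\<Sum>n. of_real (khinchin_prob a t n) * exp (z * of_real (khinchin_std a t n)))"
proof -
  define \<sigma> where "\<sigma> = sqrt (khinchin_var a t)"
  define u where "u = complex_of_real (1 / \<sigma>)"
  define c where "c = complex_of_real (ln t)"
  define \<mu> where "\<mu> = complex_of_real (khinchin_mean a t / \<sigma>)"
  define w where "w = u * z + c"
  define f where "f = pser a t"
  have \<sigma>: "\<sigma> > 0" using khinchin_var_pos[OF K t] by (simp add: \<sigma>_def)
  have f: "f > 0" unfolding f_def using pser_pos[OF K] t by simp
  have w: "ereal (norm (exp w)) < conv_radius a" "Re (eval_fps (complex_fps a) (exp w)) > 0"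
    using z by (simp_all add: std_cgf_domain_def fulcrum_domain_def w_def u_def c_def \<sigma>_def)
  have exp_c: "exp c = of_real t" using t by (simp add: c_def exp_of_real)
  have "exp (fulcrum_complex a c) = of_real f"
    using fulcrum_complex_of_real[OF K, of "ln t"] t pser_pos[OF K, of t]
    by (simp add: fulcrum_def f_def c_def exp_of_real)
  moreover have "exp (fulcrum_complex a w) = (\<Sum>n. of_real (a n) * exp w ^ n)"
    using w(2) unfolding fulcrum_complex_def
    by (subst exp_Ln) (auto simp: eval_fps_def complex_fps_def)
  ultimately have "exp (khinchin_std_cgf a t z) =
      (\<Sum>n. of_real (a n) * exp w ^ n) / (of_real f * exp (\<mu> * z))"
    by (simp add: khinchin_std_cgf_def exp_diff w_def u_def c_def \<mu>_def \<sigma>_def)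
  also have "\<dots> = (\<Sum>n. of_real (a n) * exp w ^ n / (of_real f * exp (\<mu> * z)))"
    using w(1) fps_conv_radius_complex_fps[of a]
    by (intro suminf_divide[symmetric] summable_in_conv_radius)
       (simp add: fps_conv_radius_def complex_fps_def)
  also have "\<dots> = (\<Sum>n. of_real (khinchin_prob a t n) * exp (z * of_real (khinchin_std a t n)))"
  proof (rule suminf_cong)
    fix n
    have "exp w ^ n = of_real (t ^ n) * exp (of_nat n * (u * z))"
      unfolding w_def exp_add exp_c by (simp add: power_mult_distrib exp_of_nat_mult mult.commute)
    moreover have "exp (of_nat n * (u * z)) = exp (\<mu> * z) * exp (z * of_real (khinchin_std a t n))"
    proof -
      have "of_nat n * (u * z) = \<mu> * z + z * of_real (khinchin_std a t n)"
        using \<sigma> by (simp add: khinchin_std_def u_def \<mu>_def \<sigma>_def [symmetric] field_simps)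
      then show ?thesis by (simp add: exp_add)
    qed
    ultimately show "of_real (a n) * exp w ^ n / (of_real f * exp (\<mu> * z)) =
        of_real (khinchin_prob a t n) * exp (z * of_real (khinchin_std a t n))"
      using f by (simp add: khinchin_prob_def f_def [symmetric] field_simps)
  qed
  finally show ?thesis .
qed

lemma has_fps_expansion_exp_khinchin_std_cgf:
  "(\<lambda>z. exp (khinchin_std_cgf a t z)) has_fps_expansion
     Abs_fps (\<lambda>k. of_real (khinchin_moment a t k) / fact k)"
proof -
  define \<sigma> where "\<sigma> = sqrt (khinchin_var a t)"
  have \<sigma>: "\<sigma> > 0" using khinchin_var_pos[OF K t] by (simp add: \<sigma>_def)
  obtain r where r: "ereal t < ereal r" "ereal r < conv_radius a"
    using ereal_dense2[OF t(2)] by blast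
  define \<delta> where "\<delta> = \<sigma> * ln (r / t)"
  have \<delta>: "\<delta> > 0" using \<sigma> r t by (simp add: \<delta>_def)
  have series: "(\<lambda>k. of_real (khinchin_moment a t k) / fact k * z ^ k) sums
                  (\<Sum>n. of_real (khinchin_prob a t n) * exp (z * of_real (khinchin_std a t n)))"
    if "norm z < \<delta>" for z :: complex
  proof (rule sums_khinchin_moment_series[OF K t])
    have "norm z / \<sigma> < ln (r / t)" using that \<sigma> by (simp add: \<delta>_def field_simps)
    then have "exp (norm z / \<sigma>) < exp (ln (r / t))" by simp
    also have "\<dots> = r / t" using r t by simp
    finally have "t * exp (norm z / \<sigma>) < r" using t by (simp add: field_simps)
    then show "ereal (t * exp (norm z / sqrt (khinchin_var a t))) < conv_radius a"
      using r(2) by (simp add: \<sigma>_def) (metis ereal_less(2) less_ereal.simps(1) order.strict_trans)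
  qed
  let ?F = "Abs_fps (\<lambda>k. complex_of_real (khinchin_moment a t k) / fact k)"
  have "summable (\<lambda>k. fps_nth ?F k * complex_of_real (\<delta> / 2) ^ k)"
    using series[of "of_real (\<delta> / 2)"] \<delta> by (simp add: sums_summable)
  then have "ereal (\<delta> / 2) \<le> fps_conv_radius ?F"
    using conv_radius_geI[of "fps_nth ?F" "complex_of_real (\<delta> / 2)"] \<delta>
    by (simp add: fps_conv_radius_def)
  then have "fps_conv_radius ?F > 0"
    using \<delta> by (metis ereal_less(2) half_gt_zero order.strict_trans2)
  moreover have "eventually (\<lambda>z. z \<in> std_cgf_domain a t \<inter> ball 0 \<delta>) (nhds 0)"
    using open_std_cgf_domain zero_in_std_cgf_domain \<delta> by (intro eventually_nhds_in_open) auto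
  then have "eventually (\<lambda>z. eval_fps ?F z = exp (khinchin_std_cgf a t z)) (nhds 0)"
  proof eventually_elim
    case (elim z)
    then show ?case
      using series[of z] exp_khinchin_std_cgf[of z] by (simp add: eval_fps_def sums_iff)
  qed
  ultimately show ?thesis by (simp add: has_fps_expansion_def)
qed

lemma khinchin_moment_eq_complete_bell:
  "khinchin_moment a t k = complete_bell (khinchin_std_cumulant a t) k"
proof -
  have "of_real (khinchin_moment a t k) / fact k =
          (deriv ^^ k) (\<lambda>z. exp (khinchin_std_cgf a t z)) 0 / (fact k :: complex)"
    using fps_nth_fps_expansion[OF has_fps_expansion_exp_khinchin_std_cgf, of k] by simp
  also have "(deriv ^^ k) (\<lambda>z. exp (khinchin_std_cgf a t z)) 0 =
               complete_bell (\<lambda>j. (deriv ^^ j) (khinchin_std_cgf a t) 0) k"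
    using higher_deriv_exp_complete_bell[OF holomorphic_khinchin_std_cgf open_std_cgf_domain
            zero_in_std_cgf_domain]
    by (simp add: khinchin_std_cgf_0)
  also have "\<dots> = complete_bell (\<lambda>j. of_real (khinchin_std_cumulant a t j)) k"
    by (rule complete_bell_cong) (simp add: higher_deriv_khinchin_std_cgf)
  finally show ?thesis by (simp add: complete_bell_of_real)
qed

lemma khinchin_std_cumulant_1: "khinchin_std_cumulant a t 1 = 0"
  using khinchin_moment_eq_complete_bell[of 1] khinchin_moment_1[OF K t]
  by (simp add: complete_bell.simps(2))

lemma khinchin_std_cumulant_2: "khinchin_std_cumulant a t 2 = 1"
  using khinchin_moment_eq_complete_bell[of 2] khinchin_moment_2[OF K t] khinchin_std_cumulant_1
  by (simp add: complete_bell.simps(2) numeral_2_eq_2)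

lemma fulcrum_deriv2_eq_khinchin_var: "(deriv ^^ 2) (fulcrum a) (ln t) = khinchin_var a t"
  using khinchin_std_cumulant_2 khinchin_var_pos[OF K t]
  by (simp add: khinchin_std_cumulant_def field_simps)

lemma khinchin_std_cumulant_eq:
  assumes "j \<ge> 3"
  shows "khinchin_std_cumulant a t j =
           (deriv ^^ j) (fulcrum a) (ln t) / (deriv ^^ 2) (fulcrum a) (ln t) powr (real j / 2)"
proof -
  have "sqrt (khinchin_var a t) ^ j = khinchin_var a t powr (real j / 2)"
    using khinchin_var_pos[OF K t]
    by (simp add: powr_realpow[symmetric] powr_half_sqrt[symmetric] powr_powr)
  then show ?thesis
    using assms by (simp add: khinchin_std_cumulant_def fulcrum_deriv2_eq_khinchin_var)
qed

end

context
  fixes a :: "nat \<Rightarrow> real"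
  assumes K: "in_class_K a"
    and hyp: "\<And>k::nat. k \<ge> 3 \<Longrightarrow>
           ((\<lambda>s. (deriv ^^ k) (fulcrum a) s / ((deriv ^^ 2) (fulcrum a) s) powr (real k / 2))
              \<longlongrightarrow> 0) (up_to_ln (conv_radius a))"
begin

lemma tendsto_khinchin_std_cumulant:
  assumes "j \<ge> 1"
  shows "((\<lambda>t. khinchin_std_cumulant a t j) \<longlongrightarrow> std_normal_cumulant j) (up_to (conv_radius a))"
proof -
  let ?F = "up_to (conv_radius a)"
  note disc = eventually_up_to[OF in_class_K_conv_radius_pos[OF K]]
  consider "j = 1" | "j = 2" | "j \<ge> 3" using assms by linarith
  then show ?thesis
  proof cases
    case 1
    have "eventually (\<lambda>t. khinchin_std_cumulant a t 1 = 0) ?F"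
      using disc by eventually_elim (intro khinchin_std_cumulant_1[OF K]; simp)
    then have "((\<lambda>t. khinchin_std_cumulant a t 1) \<longlongrightarrow> 0) ?F" by (rule tendsto_eventually)
    then show ?thesis by (simp add: 1 std_normal_cumulant_def)
  next
    case 2
    have "eventually (\<lambda>t. khinchin_std_cumulant a t 2 = 1) ?F"
      using disc by eventually_elim (intro khinchin_std_cumulant_2[OF K]; simp)
    then have "((\<lambda>t. khinchin_std_cumulant a t 2) \<longlongrightarrow> 1) ?F" by (rule tendsto_eventually)
    then show ?thesis by (simp add: 2 std_normal_cumulant_def)
  next
    case 3
    have "((\<lambda>t. (deriv ^^ j) (fulcrum a) (ln t) / (deriv ^^ 2) (fulcrum a) (ln t) powr (real j / 2))
            \<longlongrightarrow> std_normal_cumulant j) ?F"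
      using filterlim_compose[OF hyp[OF 3] filterlim_ln_up_to[OF in_class_K_conv_radius_pos[OF K]]] 3
      by (simp add: std_normal_cumulant_def)
    moreover have "eventually (\<lambda>t. (deriv ^^ j) (fulcrum a) (ln t) /
                      (deriv ^^ 2) (fulcrum a) (ln t) powr (real j / 2) =
                      khinchin_std_cumulant a t j) ?F"
      using disc by eventually_elim (simp add: khinchin_std_cumulant_eq[OF K _ _ 3])
    ultimately show ?thesis by (rule Lim_transform_eventually)
  qed
qed

lemma tendsto_khinchin_moment_std_normal:
  "((\<lambda>t. khinchin_moment a t k) \<longlongrightarrow> (LINT x|std_normal_distribution. x ^ k))
     (up_to (conv_radius a))"
proof -
  have "((\<lambda>t. complete_bell (khinchin_std_cumulant a t) k) \<longlongrightarrow>
           complete_bell std_normal_cumulant k) (up_to (conv_radius a))"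
    by (rule tendsto_complete_bell) (rule tendsto_khinchin_std_cumulant)
  moreover have "eventually (\<lambda>t. complete_bell (khinchin_std_cumulant a t) k =
                                  khinchin_moment a t k) (up_to (conv_radius a))"
    using eventually_up_to[OF in_class_K_conv_radius_pos[OF K]]
    by eventually_elim (simp add: khinchin_moment_eq_complete_bell[OF K])
  ultimately show ?thesis
    unfolding complete_bell_std_normal_cumulant by (rule Lim_transform_eventually)
qed

end

lemma integral_measure_pmf_nat:
  fixes P :: "nat pmf" and h :: "nat \<Rightarrow> real"
  assumes "summable (\<lambda>n. pmf P n * \<bar>h n\<bar>)"
  shows "integrable (measure_pmf P) h" "integral\<^sup>L (measure_pmf P) h = (\<Sum>n. pmf P n * h n)"
proof -
  have "integrable (count_space UNIV) (\<lambda>n. pmf P n *\<^sub>R h n)"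
    unfolding integrable_count_space_nat_iff using assms by (simp add: abs_mult)
  then show "integrable (measure_pmf P) h" "integral\<^sup>L (measure_pmf P) h = (\<Sum>n. pmf P n * h n)"
    unfolding measure_pmf_eq_density
    by (subst integrable_density integral_density; auto simp: integral_count_space_nat)+
qed

definition khinchin_pmf :: "(nat \<Rightarrow> real) \<Rightarrow> real \<Rightarrow> nat pmf" where
  "khinchin_pmf a t = embed_pmf (khinchin_prob a t)"

definition khinchin_std_distr :: "(nat \<Rightarrow> real) \<Rightarrow> real \<Rightarrow> real measure" where
  "khinchin_std_distr a t = distr (measure_pmf (khinchin_pmf a t)) borel (khinchin_std a t)"

lemma real_distribution_khinchin_std_distr: "real_distribution (khinchin_std_distr a t)"
  unfolding khinchin_std_distr_def
  by (rule prob_space.real_distribution_distr[OF prob_space_measure_pmf]) simp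

context
  fixes a :: "nat \<Rightarrow> real" and t :: real
  assumes K: "in_class_K a" and t: "0 < t" "ereal t < conv_radius a"
begin

lemma pmf_khinchin_pmf: "pmf (khinchin_pmf a t) n = khinchin_prob a t n"
  unfolding khinchin_pmf_def
proof (rule pmf_embed_pmf[OF khinchin_prob_nonneg[OF K t]])
  show "(\<integral>\<^sup>+x. ennreal (khinchin_prob a t x) \<partial>count_space UNIV) = 1"
    using suminf_khinchin_prob[OF K t]
    by (simp add: nn_integral_count_space_nat suminf_ennreal2 khinchin_prob_nonneg[OF K t]
                  summable_khinchin_prob[OF K t])
qed

lemma integrable_khinchin_std_distr_power: "integrable (khinchin_std_distr a t) (\<lambda>x. x ^ k)"
  unfolding khinchin_std_distr_def
  by (subst integrable_distr_eq)
     (auto intro!: integral_measure_pmf_nat(1)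
           simp: pmf_khinchin_pmf summable_khinchin_prob_std_pow_abs[OF K t] power_abs)

lemma integral_khinchin_std_distr_power:
  "(LINT x|khinchin_std_distr a t. x ^ k) = khinchin_moment a t k"
  unfolding khinchin_std_distr_def khinchin_moment_def
  by (subst integral_distr)
     (auto simp: integral_measure_pmf_nat(2) pmf_khinchin_pmf
                 summable_khinchin_prob_std_pow_abs[OF K t] power_abs)

lemma cdf_khinchin_std_distr: "cdf (khinchin_std_distr a t) x = khinchin_norm_cdf a t x"
proof -
  have "cdf (khinchin_std_distr a t) x =
          integral\<^sup>L (measure_pmf (khinchin_pmf a t)) (indicator (khinchin_std a t -` {..x}))"
    unfolding cdf_def khinchin_std_distr_def by (subst measure_distr) auto
  also have "\<dots> = (\<Sum>n. pmf (khinchin_pmf a t) n * indicator (khinchin_std a t -` {..x}) n)"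
    by (rule integral_measure_pmf_nat(2), rule summable_comparison_test'[OF summable_khinchin_prob[OF K t]])
       (auto simp: pmf_khinchin_pmf khinchin_prob_nonneg[OF K t] indicator_def)
  also have "\<dots> = khinchin_norm_cdf a t x"
    unfolding khinchin_norm_cdf_def pmf_khinchin_pmf khinchin_std_def
    by (intro suminf_cong) (auto simp: indicator_def)
  finally show ?thesis .
qed

end

lemma gaussian_if_khinchin_moments_tendsto:
  assumes K: "in_class_K a"
    and moments: "\<And>k. ((\<lambda>t. khinchin_moment a t k) \<longlongrightarrow> (LINT x|std_normal_distribution. x ^ k))
                         (up_to (conv_radius a))"
  shows "gaussian a"
  unfolding gaussian_def
proof (intro allI tendsto_up_to_sequentially[OF in_class_K_conv_radius_pos[OF K]])
  fix x :: real and T :: "nat \<Rightarrow> real"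
  assume T: "filterlim T (up_to (conv_radius a)) sequentially"
  let ?N = std_normal_distribution
  let ?disc = "\<lambda>t. 0 < t \<and> ereal t < conv_radius a"
  have disc: "eventually (\<lambda>n. ?disc (T n)) sequentially"
    using eventually_up_to[OF in_class_K_conv_radius_pos[OF K]] T
    by (rule eventually_compose_filterlim)
  txt \<open>Where \<open>T n\<close> lies outside the disc of convergence, \<open>M n\<close> is padded with the normal law.\<close>
  define M where "M n = (if ?disc (T n) then khinchin_std_distr a (T n) else ?N)" for n
  have "weak_conv_m M ?N"
  proof (rule weak_conv_std_normal_if_moments)
    show "real_distribution (M n)" for n
      by (simp add: M_def real_distribution_khinchin_std_distr real_dist_normal_dist)
    show "integrable (M n) (\<lambda>x. x ^ k)" for n k
      by (simp add: M_def integrable_khinchin_std_distr_power[OF K]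
                    integrable_std_normal_distribution_moment)
    show "(\<lambda>n. LINT x|M n. x ^ k) \<longlonglongrightarrow> (LINT x|?N. x ^ k)" for k
    proof (rule Lim_transform_eventually[OF filterlim_compose[OF moments T]])
      show "eventually (\<lambda>n. khinchin_moment a (T n) k = (LINT x|M n. x ^ k)) sequentially"
        using disc by eventually_elim (simp add: M_def integral_khinchin_std_distr_power[OF K])
    qed
  qed
  then have "(\<lambda>n. cdf (M n) x) \<longlonglongrightarrow> cdf ?N x"
    using isCont_cdf_std_normal by (simp add: weak_conv_m_def weak_conv_def)
  moreover have "eventually (\<lambda>n. cdf (M n) x = khinchin_norm_cdf a (T n) x) sequentially"
    using disc by eventually_elim (simp add: M_def cdf_khinchin_std_distr[OF K])
  ultimately show "(\<lambda>n. khinchin_norm_cdf a (T n) x) \<longlonglongrightarrow> cdf ?N x"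
    by (rule Lim_transform_eventually)
qed

theorem theorem3p1:
  fixes a :: "nat \<Rightarrow> real"
  assumes "in_class_K a"
    and "\<And>k::nat. k \<ge> 3 \<Longrightarrow>
           ((\<lambda>s. (deriv ^^ k) (fulcrum a) s / ((deriv ^^ 2) (fulcrum a) s) powr (real k / 2))
              \<longlongrightarrow> 0) (up_to_ln (conv_radius a))"
  shows "gaussian a"
  using assms(1) tendsto_khinchin_moment_std_normal[OF assms]
  by (rule gaussian_if_khinchin_moments_tendsto)

end
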